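(* Let $(\tau_n)$ be a sequence of positive reals with $\tau_n\to\infty$ and let $g:(0,\infty)\to(0,\infty)$ satisfy $g(\tau)\to\infty$ as $\tau\to\infty$. Then there is a Lebesgue conull set $E\subset(0,\infty)$ such that for every $r\in E$ and every $k\in\mathbb{N}$, $$\limsup_{n\to\infty}\ \tau_n^{1/2}\,|J_{k/2}(r\tau_n)|\,g(\tau_n)=\infty,$$ where $J_\nu$ denotes the Bessel function of the first kind of order $\nu$. *)

theory Defs
  imports "HOL-Analysis.Analysis"
begin

definition bessel_J :: "real \<Rightarrow> real \<Rightarrow> real" where
  "bessel_J \<nu> x = (\<Sum>m. (-1) ^ m / (fact m * Gamma (real m + \<nu> + 1))
                         * (x / 2) ^ (2 * m) * (x / 2) powr \<nu>)"

end

theory Submission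
  imports Defs
begin

(* The function u(x) = 2^nu sqrt x J_nu(x) solves u'' = -(1 - (nu^2 - 1/4) / x^2) u, so its
   energy u^2 + u'^2 stays between two positive constants for large x (a Gronwall argument).
   On a compact interval of r, the function v(r) = u(r t) therefore oscillates with frequency t
   and energy bounded below, and the arctan-weighted energy arctan(v/delta) v' shows that
   {r. |v r| <= delta} has measure O(delta) uniformly in t. Hence the set of r with
   |u(r tau_n)| <= delta for all large n has measure O(delta), so almost every r has
   sqrt(tau_n) |J_nu(r tau_n)| not tending to 0; multiplying by g(tau_n) -> infinity gives
   limsup = infinity, and E is the complement of the countably many exceptional null sets. *)

section \<open>Sublevel sets of oscillating functions\<close>

lemma compact_sublevel_family:
  fixes f :: "'i \<Rightarrow> 'a::t2_space \<Rightarrow> real"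
  assumes "compact S" and "\<And>i. i \<in> I \<Longrightarrow> continuous_on S (f i)"
  shows "compact {x\<in>S. \<forall>i\<in>I. \<bar>f i x\<bar> \<le> \<delta>}"
proof -
  have "closed (S \<inter> f i -` {-\<delta>..\<delta>})" if "i \<in> I" for i
    using assms that by (intro continuous_closed_preimage) (auto intro: compact_imp_closed)
  then have "closed (\<Inter>i\<in>I. S \<inter> f i -` {-\<delta>..\<delta>})"
    by blast
  moreover have "{x\<in>S. \<forall>i\<in>I. \<bar>f i x\<bar> \<le> \<delta>} = S \<inter> (\<Inter>i\<in>I. S \<inter> f i -` {-\<delta>..\<delta>})"
    by (auto simp: abs_le_iff)
  ultimately show ?thesis
    using \<open>compact S\<close> by (simp add: compact_Int_closed)
qed

lemma integral_lower_bound_indicator: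
  fixes h :: "real \<Rightarrow> real"
  assumes "A \<le> B" and "F \<subseteq> {A..B}" and "F \<in> lmeasurable"
    and "(h has_integral I) {A..B}"
    and "\<And>x. x \<in> {A..B} \<Longrightarrow> c * indicator F x - m \<le> h x"
  shows "c * measure lebesgue F - m * (B - A) \<le> I"
proof -
  have "(indicator F has_integral measure lebesgue F) {A..B}"
    unfolding indicator_def of_bool_def using has_integral_restrict[OF \<open>F \<subseteq> {A..B}\<close>, of "\<lambda>_. 1::real"] \<open>F \<in> lmeasurable\<close>
    by (simp add: lmeasure_integral integrable_integral lmeasurable_iff_integrable_on)
  then have "((\<lambda>x. c * indicator F x - m) has_integral c * measure lebesgue F - m * (B - A)) {A..B}"
    using \<open>A \<le> B\<close> by (auto intro!: has_integral_diff has_integral_mult_right has_integral_const_real[THEN has_integral_eq_rhs])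
  then show ?thesis
    using assms(4,5) by (rule has_integral_le)
qed

lemma has_real_derivative_arctan_mult:
  assumes "(v has_real_derivative v1) (at x)" and "(w has_real_derivative w1) (at x)" and "\<delta> > 0"
  shows "((\<lambda>x. \<delta> * arctan (v x / \<delta>) * w x) has_real_derivative
           \<delta>\<^sup>2 * v1 * w x / (\<delta>\<^sup>2 + (v x)\<^sup>2) + \<delta> * arctan (v x / \<delta>) * w1) (at x)"
proof -
  have "((\<lambda>x. \<delta> * arctan (v x / \<delta>) * w x) has_real_derivative
          \<delta> * (inverse (1 + (v x / \<delta>)\<^sup>2) * (v1 / \<delta>)) * w x + \<delta> * arctan (v x / \<delta>) * w1) (at x)"
    using assms by (auto intro!: derivative_eq_intros DERIV_chain2[OF DERIV_arctan])
  moreover have "\<delta> * (inverse (1 + (v x / \<delta>)\<^sup>2) * (v1 / \<delta>)) = \<delta>\<^sup>2 * v1 / (\<delta>\<^sup>2 + (v x)\<^sup>2)"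
    using \<open>\<delta> > 0\<close> by (simp add: field_simps power2_eq_square add_pos_nonneg)
  ultimately show ?thesis
    by simp
qed

lemma abs_arctan_mult_le:
  assumes "\<bar>w\<bar> \<le> K"
  shows "\<bar>arctan y * w\<bar> \<le> pi / 2 * K"
proof -
  have "\<bar>arctan y\<bar> \<le> pi / 2"
    using arctan_bounded[of y] by linarith
  then show ?thesis
    unfolding abs_mult using assms by (intro mult_mono) auto
qed

lemma arctan_energy_rate_ge:
  fixes y y' :: real
  assumes "\<bar>y\<bar> \<le> \<delta>" and "c \<le> y\<^sup>2 + (y' / L)\<^sup>2" and "L > 0" and "\<delta> > 0" and "\<delta>\<^sup>2 \<le> c / 2"
  shows "c * L\<^sup>2 / 4 \<le> \<delta>\<^sup>2 * y' * y' / (\<delta>\<^sup>2 + y\<^sup>2)"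
proof -
  have "y\<^sup>2 \<le> \<delta>\<^sup>2"
    using assms(1,4) abs_le_square_iff[of y \<delta>] by simp
  then have "c / 2 \<le> y'\<^sup>2 / L\<^sup>2"
    using assms(2,5) unfolding power_divide by linarith
  then have "c * L\<^sup>2 / 4 \<le> y'\<^sup>2 / 2"
    using \<open>L > 0\<close> by (simp add: field_simps)
  also have "\<dots> = \<delta>\<^sup>2 * y'\<^sup>2 / (2 * \<delta>\<^sup>2)"
    using \<open>\<delta> > 0\<close> by simp
  also have "\<dots> \<le> \<delta>\<^sup>2 * y'\<^sup>2 / (\<delta>\<^sup>2 + y\<^sup>2)"
    using \<open>y\<^sup>2 \<le> \<delta>\<^sup>2\<close> \<open>\<delta> > 0\<close> by (intro divide_left_mono) (auto intro!: mult_pos_pos add_pos_nonneg)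
  finally show ?thesis
    by (simp add: power2_eq_square)
qed

lemma measure_sublevel_le:
  fixes v v' v'' :: "real \<Rightarrow> real"
  assumes "A \<le> B" and "L > 0" and "c > 0" and "\<delta> > 0" and "\<delta>\<^sup>2 \<le> c / 2"
    and v: "\<And>x. x \<in> {A..B} \<Longrightarrow> (v has_real_derivative v' x) (at x)"
    and v': "\<And>x. x \<in> {A..B} \<Longrightarrow> (v' has_real_derivative v'' x) (at x)"
    and energy: "\<And>x. x \<in> {A..B} \<Longrightarrow> c \<le> (v x)\<^sup>2 + (v' x / L)\<^sup>2"
    and bound1: "\<And>x. x \<in> {A..B} \<Longrightarrow> \<bar>v' x\<bar> \<le> L * M1"
    and bound2: "\<And>x. x \<in> {A..B} \<Longrightarrow> \<bar>v'' x\<bar> \<le> L\<^sup>2 * M2"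
  shows "measure lebesgue {x\<in>{A..B}. \<bar>v x\<bar> \<le> \<delta>} \<le> 4 / c * (pi * \<delta> * M1 / L + pi / 2 * \<delta> * M2 * (B - A))"
proof -
  define F where "F = {x\<in>{A..B}. \<bar>v x\<bar> \<le> \<delta>}"
  have "continuous_on {A..B} v"
    using v by (meson DERIV_isCont continuous_at_imp_continuous_on)
  then have "compact F"
    using compact_sublevel_family[of "{A..B}" "{()}" "\<lambda>_. v" \<delta>] by (simp add: F_def)
  then have "F \<in> lmeasurable"
    by (rule lmeasurable_compact)
  (* G grows at rate at least c L^2 / 4 where |v| <= delta, decreases at rate at most
     delta L^2 M2 pi / 2 elsewhere, and is itself O(delta L): this bounds the measure of F. *)
  define G where "G x = \<delta> * arctan (v x / \<delta>) * v' x" for x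
  define G' where "G' x = \<delta>\<^sup>2 * v' x * v' x / (\<delta>\<^sup>2 + (v x)\<^sup>2) + \<delta> * arctan (v x / \<delta>) * v'' x" for x
  have "(G has_real_derivative G' x) (at x)" if "x \<in> {A..B}" for x
    unfolding G_def G'_def using \<open>\<delta> > 0\<close> by (intro has_real_derivative_arctan_mult v v' that)
  then have "(G' has_integral G B - G A) {A..B}"
    by (intro fundamental_theorem_of_calculus[OF \<open>A \<le> B\<close>])
       (simp add: has_real_derivative_iff_has_vector_derivative has_vector_derivative_at_within)
  moreover have "c * L\<^sup>2 / 4 * indicator F x - \<delta> * (pi / 2 * (L\<^sup>2 * M2)) \<le> G' x" if x: "x \<in> {A..B}" for x
  proof -
    define P where "P = \<delta>\<^sup>2 * v' x * v' x / (\<delta>\<^sup>2 + (v x)\<^sup>2)"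
    define Q where "Q = \<delta> * arctan (v x / \<delta>) * v'' x"
    have "0 \<le> P"
      unfolding P_def by (intro divide_nonneg_nonneg) (auto simp: mult.assoc)
    moreover have "c * L\<^sup>2 / 4 \<le> P" if "x \<in> F"
      using that energy[OF x] \<open>L > 0\<close> \<open>\<delta> > 0\<close> \<open>\<delta>\<^sup>2 \<le> c / 2\<close>
      unfolding P_def F_def by (intro arctan_energy_rate_ge) auto
    moreover have "\<bar>Q\<bar> \<le> \<delta> * (pi / 2 * (L\<^sup>2 * M2))"
      unfolding Q_def using \<open>\<delta> > 0\<close> abs_arctan_mult_le[OF bound2[OF x]]
      by (simp add: abs_mult mult.assoc mult_left_mono)
    moreover have "G' x = P + Q"
      by (simp add: G'_def P_def Q_def)
    ultimately show ?thesis
      by (cases "x \<in> F") (auto simp: abs_le_iff)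
  qed
  ultimately have "c * L\<^sup>2 / 4 * measure lebesgue F - \<delta> * (pi / 2 * (L\<^sup>2 * M2)) * (B - A) \<le> G B - G A"
    using \<open>A \<le> B\<close> \<open>F \<in> lmeasurable\<close> by (intro integral_lower_bound_indicator) (auto simp: F_def)
  moreover have "\<forall>x\<in>{A..B}. \<bar>G x\<bar> \<le> \<delta> * (pi / 2 * (L * M1))"
    unfolding G_def using \<open>\<delta> > 0\<close> abs_arctan_mult_le[OF bound1]
    by (simp add: abs_mult mult.assoc mult_left_mono)
  then have "\<bar>G A\<bar> \<le> \<delta> * (pi / 2 * (L * M1))" "\<bar>G B\<bar> \<le> \<delta> * (pi / 2 * (L * M1))"
    using \<open>A \<le> B\<close> by auto
  ultimately have "c * L\<^sup>2 / 4 * measure lebesgue F \<le> 2 * (\<delta> * (pi / 2 * (L * M1))) + \<delta> * (pi / 2 * (L\<^sup>2 * M2)) * (B - A)"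
    unfolding abs_le_iff by linarith
  also have "\<dots> = c * L\<^sup>2 / 4 * (4 / c * (pi * \<delta> * M1 / L + pi / 2 * \<delta> * M2 * (B - A)))"
    using \<open>L > 0\<close> \<open>c > 0\<close> by (simp add: field_simps power2_eq_square)
  finally show ?thesis
    using \<open>L > 0\<close> \<open>c > 0\<close> unfolding F_def by (subst (asm) mult_le_cancel_left_pos) auto
qed

lemma has_real_derivative_compose_scale:
  assumes "(f has_real_derivative f') (at (x * t))"
  shows "((\<lambda>x. f (x * t)) has_real_derivative t * f') (at x)"
proof -
  have "((\<lambda>x. f (x * t)) has_real_derivative f' * t) (at x)"
    by (rule DERIV_chain2[where g = "\<lambda>x. x * t", OF assms]) (auto intro!: derivative_eq_intros)
  then show ?thesis
    by (simp add: mult.commute)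
qed

lemma measure_sublevel_rescaled_le:
  fixes u u' u'' :: "real \<Rightarrow> real"
  assumes "a \<le> b" and "1 \<le> t" and "x0 \<le> a * t" and "c > 0" and "\<delta> > 0" and "\<delta>\<^sup>2 \<le> c / 2"
    and u: "\<And>x. x0 \<le> x \<Longrightarrow> (u has_real_derivative u' x) (at x)"
    and u': "\<And>x. x0 \<le> x \<Longrightarrow> (u' has_real_derivative u'' x) (at x)"
    and energy: "\<And>x. x0 \<le> x \<Longrightarrow> c \<le> (u x)\<^sup>2 + (u' x)\<^sup>2"
    and bound1: "\<And>x. x0 \<le> x \<Longrightarrow> \<bar>u' x\<bar> \<le> M"
    and bound2: "\<And>x. x0 \<le> x \<Longrightarrow> \<bar>u'' x\<bar> \<le> M"
  shows "measure lebesgue {r\<in>{a..b}. \<bar>u (r * t)\<bar> \<le> \<delta>} \<le> \<delta> * (4 / c * (pi * M + pi / 2 * M * (b - a)))"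
proof -
  have rt: "x0 \<le> r * t" if "r \<in> {a..b}" for r
    using that \<open>x0 \<le> a * t\<close> \<open>1 \<le> t\<close> by (smt (verit) atLeastAtMost_iff mult_right_mono)
  have "0 \<le> M"
    using bound1[of x0] by simp
  have "measure lebesgue {r\<in>{a..b}. \<bar>u (r * t)\<bar> \<le> \<delta>} \<le> 4 / c * (pi * \<delta> * M / t + pi / 2 * \<delta> * M * (b - a))"
  proof (rule measure_sublevel_le)
    fix r assume r: "r \<in> {a..b}"
    show "((\<lambda>r. u (r * t)) has_real_derivative t * u' (r * t)) (at r)"
      by (intro has_real_derivative_compose_scale u rt r)
    show "((\<lambda>r. t * u' (r * t)) has_real_derivative t\<^sup>2 * u'' (r * t)) (at r)"
      using DERIV_cmult[OF has_real_derivative_compose_scale[OF u'[OF rt[OF r]]], of t]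
      by (simp add: power2_eq_square mult_ac)
    show "c \<le> (u (r * t))\<^sup>2 + (t * u' (r * t) / t)\<^sup>2"
      using energy[OF rt[OF r]] \<open>1 \<le> t\<close> by simp
    show "\<bar>t * u' (r * t)\<bar> \<le> t * M"
      using bound1[OF rt[OF r]] \<open>1 \<le> t\<close> by (simp add: abs_mult)
    show "\<bar>t\<^sup>2 * u'' (r * t)\<bar> \<le> t\<^sup>2 * M"
      using bound2[OF rt[OF r]] by (simp add: abs_mult mult_left_mono)
  qed (use assms in auto)
  also have "\<dots> \<le> 4 / c * (pi * \<delta> * M + pi / 2 * \<delta> * M * (b - a))"
  proof -
    have "0 \<le> pi * \<delta> * M"
      using \<open>0 \<le> M\<close> \<open>0 < \<delta>\<close> by simp
    then have "pi * \<delta> * M / t \<le> pi * \<delta> * M"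
      using \<open>1 \<le> t\<close> by (simp add: divide_le_eq mult_le_cancel_left1)
    then show ?thesis
      using \<open>0 < c\<close> by (intro mult_left_mono) auto
  qed
  also have "\<dots> = \<delta> * (4 / c * (pi * M + pi / 2 * M * (b - a)))"
    by (simp add: algebra_simps)
  finally show ?thesis .
qed

section \<open>Null sets from uniformly small sublevel sets\<close>

lemma negligible_tendsto_zero_if_sublevel_small:
  fixes h :: "nat \<Rightarrow> 'a::euclidean_space \<Rightarrow> real"
  assumes "compact S" and cont: "\<And>n. continuous_on S (h n)" and "0 < \<delta>0"
    and small: "\<And>\<delta>. 0 < \<delta> \<Longrightarrow> \<delta> \<le> \<delta>0 \<Longrightarrow>
                  \<exists>\<^sub>F n in sequentially. measure lebesgue {x\<in>S. \<bar>h n x\<bar> \<le> \<delta>} \<le> \<delta> * K"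
  shows "negligible {x\<in>S. (\<lambda>n. h n x) \<longlonglongrightarrow> 0}"
  unfolding negligible_outer_le
proof (intro allI impI)
  fix e :: real assume "e > 0"
  define \<delta> where "\<delta> = min \<delta>0 (e / (\<bar>K\<bar> + 1))"
  have "0 < \<delta>" "\<delta> \<le> \<delta>0"
    using \<open>0 < \<delta>0\<close> \<open>e > 0\<close> by (auto simp: \<delta>_def)
  have "\<delta> * K \<le> \<delta> * (\<bar>K\<bar> + 1)"
    using \<open>0 < \<delta>\<close> by (intro mult_left_mono) auto
  also have "\<dots> \<le> e"
    using min.cobounded2[of \<delta>0 "e / (\<bar>K\<bar> + 1)"] by (simp add: \<delta>_def le_divide_eq add_pos_nonneg)
  finally have "\<delta> * K \<le> e" .
  define Y where "Y M = {x\<in>S. \<forall>n\<in>{M..}. \<bar>h n x\<bar> \<le> \<delta>}" for M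
  have Y_lmeasurable: "Y M \<in> lmeasurable" for M
    unfolding Y_def using \<open>compact S\<close> cont by (intro lmeasurable_compact compact_sublevel_family)
  have Y_small: "measure lebesgue (Y M) \<le> \<delta> * K" for M
  proof -
    obtain n where "n \<ge> M" and n: "measure lebesgue {x\<in>S. \<bar>h n x\<bar> \<le> \<delta>} \<le> \<delta> * K"
      using small[OF \<open>0 < \<delta>\<close> \<open>\<delta> \<le> \<delta>0\<close>] unfolding frequently_sequentially by blast
    have "{x\<in>S. \<bar>h n x\<bar> \<le> \<delta>} \<in> lmeasurable"
      using compact_sublevel_family[OF \<open>compact S\<close>, of "{n}" h \<delta>] cont by (simp add: lmeasurable_compact)
    moreover have "Y M \<subseteq> {x\<in>S. \<bar>h n x\<bar> \<le> \<delta>}"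
      using \<open>n \<ge> M\<close> by (auto simp: Y_def)
    ultimately show ?thesis
      using n Y_lmeasurable by (meson measure_mono_fmeasurable fmeasurableD order_trans)
  qed
  have "mono Y"
    by (auto simp: mono_def Y_def)
  then have "(\<Union>M\<le>n. Y M) = Y n" for n
    by (auto simp: mono_def)
  then have "(\<Union>M. Y M) \<in> lmeasurable" and "measure lebesgue (\<Union>M. Y M) \<le> \<delta> * K"
    using Y_lmeasurable Y_small
    by (auto intro!: fmeasurable_countable_Union measure_countable_Union_le)
  moreover have "{x\<in>S. (\<lambda>n. h n x) \<longlonglongrightarrow> 0} \<subseteq> (\<Union>M. Y M)"
  proof
    fix x assume "x \<in> {x\<in>S. (\<lambda>n. h n x) \<longlonglongrightarrow> 0}"
    then have "x \<in> S" and "\<forall>\<^sub>F n in sequentially. dist (h n x) 0 < \<delta>"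
      using \<open>0 < \<delta>\<close> tendstoD[of "\<lambda>n. h n x" 0 sequentially \<delta>] by auto
    then obtain M where "\<forall>n\<ge>M. \<bar>h n x\<bar> < \<delta>"
      unfolding eventually_sequentially by auto
    then have "x \<in> Y M"
      using \<open>x \<in> S\<close> by (auto simp: Y_def less_imp_le)
    then show "x \<in> (\<Union>M. Y M)"
      by blast
  qed
  ultimately show "\<exists>T. {x\<in>S. (\<lambda>n. h n x) \<longlonglongrightarrow> 0} \<subseteq> T \<and> T \<in> lmeasurable \<and> measure lebesgue T \<le> e"
    using \<open>\<delta> * K \<le> e\<close> by (meson order_trans)
qed

lemma negligible_if_negligible_on_intervals:
  fixes N :: "real set"
  assumes "\<And>a b. 0 < a \<Longrightarrow> a \<le> b \<Longrightarrow> negligible (N \<inter> {a..b})"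
  shows "negligible (N \<inter> {0<..})"
proof -
  have "N \<inter> {0<..} \<subseteq> (\<Union>j::nat. N \<inter> {1 / (real j + 1)..real j + 1})"
  proof
    fix r assume r: "r \<in> N \<inter> {0<..}"
    obtain j :: nat where j: "max r (1 / r) \<le> real j"
      using real_arch_simple by blast
    have "r > 0"
      using r by simp
    then have "1 \<le> r * (real j + 1)"
      using j by (simp add: field_simps)
    then have "1 / (real j + 1) \<le> r" and "r \<le> real j + 1"
      using j by (simp_all add: divide_le_eq mult.commute)
    then show "r \<in> (\<Union>j. N \<inter> {1 / (real j + 1)..real j + 1})"
      using r by auto
  qed
  moreover have "negligible (\<Union>j::nat. N \<inter> {1 / (real j + 1)..real j + 1})"
  proof (intro negligible_Union_nat assms)
    show "1 / (real j + 1) \<le> real j + 1" for j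
      using order_trans[of "1 / (real j + 1)" 1 "real j + 1"] by simp
  qed simp
  ultimately show ?thesis
    using negligible_subset by blast
qed

section \<open>Bessel's equation in normal form\<close>

lemma inverse_square_gronwall:
  fixes V V' :: "real \<Rightarrow> real"
  assumes "0 < x0" and "x0 \<le> x" and "0 \<le> a" and "0 \<le> V x"
    and deriv: "\<And>y. x0 \<le> y \<Longrightarrow> y \<le> x \<Longrightarrow> (V has_real_derivative V' y) (at y)"
    and growth: "\<And>y. x0 \<le> y \<Longrightarrow> y \<le> x \<Longrightarrow> \<bar>V' y\<bar> \<le> a * V y / y\<^sup>2"
  shows "V x0 * exp (- a / x0) \<le> V x" and "V x \<le> V x0 * exp (a / x0)"
proof -
  have "V x0 * exp (- a / x0) \<le> V x * exp (- a / x)"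
  proof (rule DERIV_nonneg_imp_nondecreasing[OF \<open>x0 \<le> x\<close>])
    fix y assume y: "x0 \<le> y" "y \<le> x"
    have "((\<lambda>y. V y * exp (- a / y)) has_real_derivative
            (V' y + a * V y / y\<^sup>2) * exp (- a / y)) (at y)"
      using y \<open>0 < x0\<close> by (auto intro!: derivative_eq_intros deriv simp: field_simps power2_eq_square)
    moreover have "0 \<le> V' y + a * V y / y\<^sup>2"
      using growth[OF y] by linarith
    ultimately show "\<exists>d. ((\<lambda>y. V y * exp (- a / y)) has_real_derivative d) (at y) \<and> 0 \<le> d"
      by force
  qed
  also have "\<dots> \<le> V x"
    using assms by (intro mult_left_le) auto
  finally show "V x0 * exp (- a / x0) \<le> V x" .
  have "V x \<le> V x * exp (a / x)"
    using assms by (intro mult_le_cancel_left1[THEN iffD2]) auto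
  also have "\<dots> \<le> V x0 * exp (a / x0)"
  proof (rule DERIV_nonpos_imp_nonincreasing[OF \<open>x0 \<le> x\<close>])
    fix y assume y: "x0 \<le> y" "y \<le> x"
    have "((\<lambda>y. V y * exp (a / y)) has_real_derivative
            (V' y - a * V y / y\<^sup>2) * exp (a / y)) (at y)"
      using y \<open>0 < x0\<close> by (auto intro!: derivative_eq_intros deriv simp: field_simps power2_eq_square)
    moreover have "V' y - a * V y / y\<^sup>2 \<le> 0"
      using growth[OF y] by linarith
    ultimately show "\<exists>d. ((\<lambda>y. V y * exp (a / y)) has_real_derivative d) (at y) \<and> d \<le> 0"
      by (force intro: mult_nonpos_nonneg)
  qed
  finally show "V x \<le> V x0 * exp (a / x0)" .
qed

locale bessel_normal_form =
  fixes u u' :: "real \<Rightarrow> real" and \<alpha> :: real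
  assumes has_deriv_u: "\<And>x. 0 < x \<Longrightarrow> (u has_real_derivative u' x) (at x)"
    and has_deriv_u': "\<And>x. 0 < x \<Longrightarrow> (u' has_real_derivative - (1 - \<alpha> / x\<^sup>2) * u x) (at x)"
begin

lemma energy_bounds:
  assumes "0 < x0" and "x0 \<le> x"
  shows "((u x0)\<^sup>2 + (u' x0)\<^sup>2) * exp (- \<bar>\<alpha>\<bar> / x0) \<le> (u x)\<^sup>2 + (u' x)\<^sup>2"
    and "(u x)\<^sup>2 + (u' x)\<^sup>2 \<le> ((u x0)\<^sup>2 + (u' x0)\<^sup>2) * exp (\<bar>\<alpha>\<bar> / x0)"
proof -
  have deriv: "((\<lambda>y. (u y)\<^sup>2 + (u' y)\<^sup>2) has_real_derivative 2 * \<alpha> * u y * u' y / y\<^sup>2) (at y)" if "x0 \<le> y" for y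
  proof -
    have "0 < y"
      using assms(1) that by linarith
    have "((\<lambda>y. (u y)\<^sup>2 + (u' y)\<^sup>2) has_real_derivative
            2 * u y * u' y + 2 * u' y * (- (1 - \<alpha> / y\<^sup>2) * u y)) (at y)"
      using \<open>0 < y\<close> by (auto intro!: derivative_eq_intros has_deriv_u has_deriv_u')
    then show ?thesis
      using \<open>0 < y\<close> by (simp add: field_simps power2_eq_square)
  qed
  have growth: "\<bar>2 * \<alpha> * u y * u' y / y\<^sup>2\<bar> \<le> \<bar>\<alpha>\<bar> * ((u y)\<^sup>2 + (u' y)\<^sup>2) / y\<^sup>2" for y
  proof -
    have "2 * \<bar>u y\<bar> * \<bar>u' y\<bar> \<le> (u y)\<^sup>2 + (u' y)\<^sup>2"
      using sum_squares_bound[of "\<bar>u y\<bar>" "\<bar>u' y\<bar>"] by simp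
    then have "\<bar>\<alpha>\<bar> * (2 * \<bar>u y\<bar> * \<bar>u' y\<bar>) / y\<^sup>2 \<le> \<bar>\<alpha>\<bar> * ((u y)\<^sup>2 + (u' y)\<^sup>2) / y\<^sup>2"
      by (intro divide_right_mono mult_left_mono) auto
    then show ?thesis
      by (simp add: abs_mult mult_ac)
  qed
  show "((u x0)\<^sup>2 + (u' x0)\<^sup>2) * exp (- \<bar>\<alpha>\<bar> / x0) \<le> (u x)\<^sup>2 + (u' x)\<^sup>2"
    by (rule inverse_square_gronwall(1)[OF assms]) (use deriv growth in auto)
  show "(u x)\<^sup>2 + (u' x)\<^sup>2 \<le> ((u x0)\<^sup>2 + (u' x0)\<^sup>2) * exp (\<bar>\<alpha>\<bar> / x0)"
    by (rule inverse_square_gronwall(2)[OF assms]) (use deriv growth in auto)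
qed

lemma uniform_bounds_beyond:
  assumes "0 < x0" and "u x0 \<noteq> 0 \<or> u' x0 \<noteq> 0"
  obtains c M where "0 < c" and "\<And>x. x0 \<le> x \<Longrightarrow> c \<le> (u x)\<^sup>2 + (u' x)\<^sup>2"
    and "\<And>x. x0 \<le> x \<Longrightarrow> \<bar>u' x\<bar> \<le> M"
    and "\<And>x. x0 \<le> x \<Longrightarrow> \<bar>- (1 - \<alpha> / x\<^sup>2) * u x\<bar> \<le> M"
proof
  define E0 where "E0 = (u x0)\<^sup>2 + (u' x0)\<^sup>2"
  define M where "M = (1 + \<bar>\<alpha>\<bar> / x0\<^sup>2) * sqrt (E0 * exp (\<bar>\<alpha>\<bar> / x0))"
  have "0 < E0"
    using assms(2) by (simp add: E0_def sum_power2_gt_zero_iff)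
  then show "0 < E0 * exp (- \<bar>\<alpha>\<bar> / x0)"
    by simp
  show "E0 * exp (- \<bar>\<alpha>\<bar> / x0) \<le> (u x)\<^sup>2 + (u' x)\<^sup>2" if "x0 \<le> x" for x
    using energy_bounds(1)[OF \<open>0 < x0\<close> that] by (simp add: E0_def)
  define R where "R = sqrt (E0 * exp (\<bar>\<alpha>\<bar> / x0))"
  have "\<bar>u x\<bar>\<^sup>2 \<le> E0 * exp (\<bar>\<alpha>\<bar> / x0)" "\<bar>u' x\<bar>\<^sup>2 \<le> E0 * exp (\<bar>\<alpha>\<bar> / x0)" if "x0 \<le> x" for x
    using energy_bounds(2)[OF \<open>0 < x0\<close> that] unfolding E0_def power2_abs
    by (smt (verit) zero_le_power2)+
  then have R: "\<bar>u x\<bar> \<le> R" "\<bar>u' x\<bar> \<le> R" if "x0 \<le> x" for x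
    using that unfolding R_def by (auto intro: real_le_rsqrt)
  have "\<bar>1 - \<alpha> / x\<^sup>2\<bar> \<le> 1 + \<bar>\<alpha>\<bar> / x0\<^sup>2" if "x0 \<le> x" for x
  proof -
    have "\<bar>\<alpha> / x\<^sup>2\<bar> \<le> \<bar>\<alpha>\<bar> / x0\<^sup>2"
      unfolding abs_divide using that \<open>0 < x0\<close> by (intro divide_left_mono power_mono mult_pos_pos) auto
    then show ?thesis
      using abs_triangle_ineq4[of 1 "\<alpha> / x\<^sup>2"] by simp
  qed
  then show "\<bar>- (1 - \<alpha> / x\<^sup>2) * u x\<bar> \<le> M" if "x0 \<le> x" for x
    unfolding M_def R_def[symmetric] abs_mult abs_minus_cancel using R(1)[OF that] that by (intro mult_mono) auto
  have "R \<le> M"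
    unfolding M_def R_def[symmetric] using \<open>0 < E0\<close> by (simp add: distrib_right R_def)
  then show "\<bar>u' x\<bar> \<le> M" if "x0 \<le> x" for x
    using R(2)[OF that] by linarith
qed

lemma uniform_sublevel_measure_bound:
  assumes "0 < x0" and "u x0 \<noteq> 0 \<or> u' x0 \<noteq> 0" and "a \<le> b"
  obtains \<delta>0 K where "0 < \<delta>0"
    and "\<And>\<delta> t. 0 < \<delta> \<Longrightarrow> \<delta> \<le> \<delta>0 \<Longrightarrow> 1 \<le> t \<Longrightarrow> x0 \<le> a * t \<Longrightarrow>
           measure lebesgue {r\<in>{a..b}. \<bar>u (r * t)\<bar> \<le> \<delta>} \<le> \<delta> * K"
proof -
  obtain c M where "0 < c" and energy: "\<And>x. x0 \<le> x \<Longrightarrow> c \<le> (u x)\<^sup>2 + (u' x)\<^sup>2"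
    and bound1: "\<And>x. x0 \<le> x \<Longrightarrow> \<bar>u' x\<bar> \<le> M"
    and bound2: "\<And>x. x0 \<le> x \<Longrightarrow> \<bar>- (1 - \<alpha> / x\<^sup>2) * u x\<bar> \<le> M"
    using uniform_bounds_beyond[OF assms(1,2)] by blast
  show thesis
  proof
    show "0 < sqrt (c / 2)"
      using \<open>0 < c\<close> by simp
    fix \<delta> t assume "0 < \<delta>" "\<delta> \<le> sqrt (c / 2)" "1 \<le> t" "x0 \<le> a * t"
    have "\<delta>\<^sup>2 \<le> c / 2"
      using power_mono[OF \<open>\<delta> \<le> sqrt (c / 2)\<close>, of 2] \<open>0 < \<delta>\<close> \<open>0 < c\<close> by simp
    show "measure lebesgue {r\<in>{a..b}. \<bar>u (r * t)\<bar> \<le> \<delta>} \<le> \<delta> * (4 / c * (pi * M + pi / 2 * M * (b - a)))"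
    proof (rule measure_sublevel_rescaled_le[where u' = u' and u'' = "\<lambda>x. - (1 - \<alpha> / x\<^sup>2) * u x"])
      fix x assume "x0 \<le> x"
      then have "0 < x"
        using \<open>0 < x0\<close> by linarith
      then show "(u has_real_derivative u' x) (at x)"
        and "(u' has_real_derivative - (1 - \<alpha> / x\<^sup>2) * u x) (at x)"
        by (rule has_deriv_u has_deriv_u')+
    qed (use assms(3) \<open>0 < c\<close> \<open>0 < \<delta>\<close> \<open>\<delta>\<^sup>2 \<le> c / 2\<close> \<open>1 \<le> t\<close> \<open>x0 \<le> a * t\<close>
           energy bound1 bound2 in auto)
  qed
qed

lemma negligible_tendsto_zero:
  fixes \<tau> :: "nat \<Rightarrow> real"
  assumes "\<And>n. 0 < \<tau> n" and "filterlim \<tau> at_top sequentially"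
    and "0 < x0" and "u x0 \<noteq> 0 \<or> u' x0 \<noteq> 0"
  shows "negligible {r. 0 < r \<and> (\<lambda>n. u (r * \<tau> n)) \<longlonglongrightarrow> 0}"
proof -
  have "negligible ({r. 0 < r \<and> (\<lambda>n. u (r * \<tau> n)) \<longlonglongrightarrow> 0} \<inter> {a..b})" if ab: "0 < a" "a \<le> b" for a b
  proof -
    obtain \<delta>0 K where "0 < \<delta>0" and small: "\<And>\<delta> t. 0 < \<delta> \<Longrightarrow> \<delta> \<le> \<delta>0 \<Longrightarrow> 1 \<le> t \<Longrightarrow> x0 \<le> a * t \<Longrightarrow>
        measure lebesgue {r\<in>{a..b}. \<bar>u (r * t)\<bar> \<le> \<delta>} \<le> \<delta> * K"
      using uniform_sublevel_measure_bound[OF assms(3,4) ab(2)] by blast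
    have "continuous_on {a..b} (\<lambda>r. u (r * \<tau> n))" for n
    proof (intro continuous_at_imp_continuous_on ballI)
      fix r assume "r \<in> {a..b}"
      then have "0 < r * \<tau> n"
        using \<open>0 < a\<close> assms(1)[of n] by simp
      then show "isCont (\<lambda>r. u (r * \<tau> n)) r"
        using has_real_derivative_compose_scale[OF has_deriv_u] by (blast intro: DERIV_isCont)
    qed
    moreover have "\<exists>\<^sub>F n in sequentially. measure lebesgue {r\<in>{a..b}. \<bar>u (r * \<tau> n)\<bar> \<le> \<delta>} \<le> \<delta> * K"
      if "0 < \<delta>" "\<delta> \<le> \<delta>0" for \<delta>
    proof (rule eventually_frequently)
      have "\<forall>\<^sub>F n in sequentially. max 1 (x0 / a) \<le> \<tau> n"
        using assms(2) unfolding filterlim_at_top by blast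
      then show "\<forall>\<^sub>F n in sequentially. measure lebesgue {r\<in>{a..b}. \<bar>u (r * \<tau> n)\<bar> \<le> \<delta>} \<le> \<delta> * K"
      proof (rule eventually_mono)
        fix n assume "max 1 (x0 / a) \<le> \<tau> n"
        then have "1 \<le> \<tau> n" and "x0 \<le> a * \<tau> n"
          using \<open>0 < a\<close> by (auto simp: field_simps)
        then show "measure lebesgue {r\<in>{a..b}. \<bar>u (r * \<tau> n)\<bar> \<le> \<delta>} \<le> \<delta> * K"
          using that by (intro small)
      qed
    qed simp
    ultimately have "negligible {r\<in>{a..b}. (\<lambda>n. u (r * \<tau> n)) \<longlonglongrightarrow> 0}"
      using \<open>0 < \<delta>0\<close> by (intro negligible_tendsto_zero_if_sublevel_small) auto
    then show ?thesis
      by (rule negligible_subset) auto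
  qed
  then have "negligible ({r. 0 < r \<and> (\<lambda>n. u (r * \<tau> n)) \<longlonglongrightarrow> 0} \<inter> {0<..})"
    by (rule negligible_if_negligible_on_intervals)
  then show ?thesis
    by (rule negligible_subset) auto
qed

end

section \<open>The power series of the Bessel function\<close>

definition power_series :: "(nat \<Rightarrow> real) \<Rightarrow> real \<Rightarrow> real" where
  "power_series c y = (\<Sum>m. c m * y ^ m)"

lemma has_real_derivative_power_series:
  assumes "\<And>y. summable (\<lambda>m. c m * y ^ m)"
  shows "(power_series c has_real_derivative power_series (diffs c) y) (at y)"
  unfolding power_series_def using assms by (rule termdiffs_strong_converges_everywhere)

lemma mult_power_series_diffs:
  assumes "summable (\<lambda>m. diffs c m * y ^ m)"
  shows "(\<lambda>m. real m * c m * y ^ m) sums (y * power_series (diffs c) y)"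
proof -
  have "(\<lambda>m. diffs c m * y ^ m * y) sums (power_series (diffs c) y * y)"
    unfolding power_series_def using assms by (intro sums_mult2 summable_sums)
  then have "(\<lambda>m. real (Suc m) * c (Suc m) * y ^ Suc m) sums (power_series (diffs c) y * y)"
    by (simp add: diffs_def mult_ac)
  then show ?thesis
    by (subst (asm) sums_Suc_iff) (simp add: mult.commute)
qed

definition bessel_coeff :: "real \<Rightarrow> nat \<Rightarrow> real" where
  "bessel_coeff \<nu> m = (-1) ^ m / (fact m * Gamma (real m + \<nu> + 1))"

lemma bessel_coeff_Suc:
  assumes "-1 < \<nu>"
  shows "bessel_coeff \<nu> (Suc n) = - bessel_coeff \<nu> n / ((real n + 1) * (real n + \<nu> + 1))"
proof -
  have "0 < real n + \<nu> + 1"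
    using assms by simp
  then have "real n + \<nu> + 1 \<notin> \<int>\<^sub>\<le>\<^sub>0"
    by (auto elim!: nonpos_Ints_cases)
  then have "Gamma (real (Suc n) + \<nu> + 1) = (real n + \<nu> + 1) * Gamma (real n + \<nu> + 1)"
    using Gamma_plus1[of "real n + \<nu> + 1"] by (simp add: add_ac)
  moreover have "0 < Gamma (real n + \<nu> + 1)"
    using \<open>0 < real n + \<nu> + 1\<close> by (rule Gamma_real_pos)
  ultimately show ?thesis
    using \<open>0 < real n + \<nu> + 1\<close> by (simp add: bessel_coeff_def field_simps)
qed

lemma summable_bessel_coeff:
  assumes "-1 < \<nu>"
  shows "summable (\<lambda>m. bessel_coeff \<nu> m * y ^ m)"
proof (rule summable_ratio_test[where c = "1/2" and N = "Suc (nat \<lceil>2 * \<bar>y\<bar>\<rceil>)"])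
  fix n assume "Suc (nat \<lceil>2 * \<bar>y\<bar>\<rceil>) \<le> n"
  then have "2 * \<bar>y\<bar> \<le> real n + 1" and "1 \<le> real n + \<nu> + 1"
    using assms by linarith+
  then have "2 * \<bar>y\<bar> \<le> (real n + 1) * (real n + \<nu> + 1)"
    by (smt (verit) mult_le_cancel_left1)
  then have "\<bar>y\<bar> / ((real n + 1) * (real n + \<nu> + 1)) \<le> 1 / 2"
    using \<open>1 \<le> real n + \<nu> + 1\<close> by (simp add: divide_le_eq)
  then have "\<bar>y\<bar> / ((real n + 1) * (real n + \<nu> + 1)) * norm (bessel_coeff \<nu> n * y ^ n)
              \<le> 1 / 2 * norm (bessel_coeff \<nu> n * y ^ n)"
    by (rule mult_right_mono) simp
  moreover have "norm (bessel_coeff \<nu> (Suc n) * y ^ Suc n)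
      = \<bar>y\<bar> / ((real n + 1) * (real n + \<nu> + 1)) * norm (bessel_coeff \<nu> n * y ^ n)"
    using \<open>1 \<le> real n + \<nu> + 1\<close>
    by (simp add: bessel_coeff_Suc[OF assms] abs_mult abs_divide abs_of_pos)
  ultimately show "norm (bessel_coeff \<nu> (Suc n) * y ^ Suc n) \<le> 1 / 2 * norm (bessel_coeff \<nu> n * y ^ n)"
    by simp
qed simp

lemma diffs_bessel_coeff:
  assumes "-1 < \<nu>"
  shows "diffs (bessel_coeff \<nu>) n = - bessel_coeff \<nu> n / (real n + \<nu> + 1)"
  unfolding diffs_def bessel_coeff_Suc[OF assms] by (simp add: add.commute)

lemma bessel_series_ode:
  assumes "-1 < \<nu>"
  defines "c \<equiv> bessel_coeff \<nu>"
  shows "y * power_series (diffs (diffs c)) y + (\<nu> + 1) * power_series (diffs c) y + power_series c y = 0"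
proof -
  have c: "summable (\<lambda>m. c m * y ^ m)" for y
    unfolding c_def by (rule summable_bessel_coeff[OF assms(1)])
  then have c': "summable (\<lambda>m. diffs c m * y ^ m)" for y
    by (rule termdiff_converges_all)
  then have "summable (\<lambda>m. diffs (diffs c) m * y ^ m)"
    by (rule termdiff_converges_all)
  then have "(\<lambda>m. real m * diffs c m * y ^ m + (\<nu> + 1) * (diffs c m * y ^ m) + c m * y ^ m) sums
      (y * power_series (diffs (diffs c)) y + (\<nu> + 1) * power_series (diffs c) y + power_series c y)"
    unfolding power_series_def using c c'
    by (intro sums_add sums_mult mult_power_series_diffs[unfolded power_series_def] summable_sums)
  moreover have "real m * diffs c m * y ^ m + (\<nu> + 1) * (diffs c m * y ^ m) + c m * y ^ m = 0" for m
  proof -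
    have "(real m + \<nu> + 1) * diffs c m + c m = 0"
      using assms by (simp add: c_def diffs_bessel_coeff)
    moreover have "real m * diffs c m * y ^ m + (\<nu> + 1) * (diffs c m * y ^ m) + c m * y ^ m
        = ((real m + \<nu> + 1) * diffs c m + c m) * y ^ m"
      by (simp add: algebra_simps)
    ultimately show ?thesis
      by simp
  qed
  ultimately show ?thesis
    by (simp add: sums_0 sums_unique2)
qed

lemma bessel_J_eq_power_series:
  assumes "-1 < \<nu>"
  shows "bessel_J \<nu> x = (x / 2) powr \<nu> * power_series (bessel_coeff \<nu>) ((x / 2)\<^sup>2)"
proof -
  have "bessel_J \<nu> x = (\<Sum>m. bessel_coeff \<nu> m * ((x / 2)\<^sup>2) ^ m * (x / 2) powr \<nu>)"
    unfolding bessel_J_def bessel_coeff_def by (simp add: power_mult)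
  also have "\<dots> = power_series (bessel_coeff \<nu>) ((x / 2)\<^sup>2) * (x / 2) powr \<nu>"
    unfolding power_series_def using summable_bessel_coeff[OF assms] by (rule suminf_mult2[symmetric])
  finally show ?thesis
    by simp
qed

lemma power_series_bessel_coeff_nonzero:
  assumes "-1 < \<nu>"
  obtains y where "0 < y" and "power_series (bessel_coeff \<nu>) y \<noteq> 0"
proof -
  have "isCont (power_series (bessel_coeff \<nu>)) 0"
    unfolding power_series_def using summable_bessel_coeff[OF assms]
    by (rule isCont_powser_converges_everywhere)
  moreover have "power_series (bessel_coeff \<nu>) 0 = 1 / Gamma (\<nu> + 1)"
    unfolding power_series_def powser_zero by (simp add: bessel_coeff_def)
  moreover have "0 < Gamma (\<nu> + 1)"
    using assms by (intro Gamma_real_pos) simp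
  ultimately have "\<forall>\<^sub>F y in at 0. power_series (bessel_coeff \<nu>) y \<noteq> 0"
    unfolding isCont_def by (intro tendsto_imp_eventually_ne) auto
  then have "\<forall>\<^sub>F y in at_right 0. power_series (bessel_coeff \<nu>) y \<noteq> 0"
    by (simp add: eventually_at_split)
  then have "\<exists>\<^sub>F y in at_right 0. power_series (bessel_coeff \<nu>) y \<noteq> 0"
    by (rule eventually_frequently[rotated]) simp
  then have "\<exists>\<^sub>F y in at_right 0. power_series (bessel_coeff \<nu>) y \<noteq> 0 \<and> 0 < y"
    using eventually_at_right_less by (rule frequently_eventually_frequently)
  then show ?thesis
    using that by (auto dest: frequently_ex)
qed

lemma has_real_derivative_power_series_half_square:
  assumes "\<And>y. summable (\<lambda>m. c m * y ^ m)"
  shows "((\<lambda>x. power_series c ((x / 2)\<^sup>2)) has_real_derivative power_series (diffs c) ((x / 2)\<^sup>2) * (x / 2)) (at x)"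
  by (rule DERIV_chain2[OF has_real_derivative_power_series[OF assms]]) (auto intro!: derivative_eq_intros)

definition bessel_u :: "real \<Rightarrow> real \<Rightarrow> real" where
  "bessel_u \<nu> x = x powr (\<nu> + 1/2) * power_series (bessel_coeff \<nu>) ((x / 2)\<^sup>2)"

definition bessel_u' :: "real \<Rightarrow> real \<Rightarrow> real" where
  "bessel_u' \<nu> x = (\<nu> + 1/2) * x powr (\<nu> - 1/2) * power_series (bessel_coeff \<nu>) ((x / 2)\<^sup>2)
     + x powr (\<nu> + 1/2) * (x / 2) * power_series (diffs (bessel_coeff \<nu>)) ((x / 2)\<^sup>2)"

lemma abs_bessel_u:
  assumes "-1 < \<nu>" and "0 < x"
  shows "\<bar>bessel_u \<nu> x\<bar> = 2 powr \<nu> * sqrt x * \<bar>bessel_J \<nu> x\<bar>"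
proof -
  have "bessel_u \<nu> x = x powr \<nu> * sqrt x * power_series (bessel_coeff \<nu>) ((x / 2)\<^sup>2)"
    unfolding bessel_u_def using assms(2) by (simp add: powr_add powr_half_sqrt)
  moreover have "bessel_J \<nu> x = x powr \<nu> / 2 powr \<nu> * power_series (bessel_coeff \<nu>) ((x / 2)\<^sup>2)"
    unfolding bessel_J_eq_power_series[OF assms(1)] using assms(2) by (simp add: powr_divide)
  ultimately show ?thesis
    using assms(2) by (simp add: abs_mult)
qed

lemma bessel_u_nonzero:
  assumes "-1 < \<nu>"
  obtains x0 where "0 < x0" and "bessel_u \<nu> x0 \<noteq> 0"
proof -
  obtain y where "0 < y" and "power_series (bessel_coeff \<nu>) y \<noteq> 0"
    using power_series_bessel_coeff_nonzero[OF assms] by blast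
  moreover have "(2 * sqrt y / 2)\<^sup>2 = y"
    using \<open>0 < y\<close> by simp
  ultimately show ?thesis
    using that[of "2 * sqrt y"] by (simp add: bessel_u_def)
qed

lemma has_real_derivative_bessel_u:
  assumes "-1 < \<nu>" and "0 < x"
  shows "(bessel_u \<nu> has_real_derivative bessel_u' \<nu> x) (at x)"
  unfolding bessel_u_def bessel_u'_def using assms(2)
  by (auto intro!: derivative_eq_intros has_real_derivative_power_series_half_square
                   summable_bessel_coeff[OF assms(1)] has_real_derivative_powr simp: algebra_simps)

lemma has_real_derivative_bessel_u':
  assumes "-1 < \<nu>" and "0 < x"
  shows "(bessel_u' \<nu> has_real_derivative - (1 - (\<nu> + 1/2) * (\<nu> - 1/2) / x\<^sup>2) * bessel_u \<nu> x) (at x)"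
proof -
  define p where "p = \<nu> + 1/2"
  define S where "S = power_series (bessel_coeff \<nu>) ((x / 2)\<^sup>2)"
  define S1 where "S1 = power_series (diffs (bessel_coeff \<nu>)) ((x / 2)\<^sup>2)"
  define S2 where "S2 = power_series (diffs (diffs (bessel_coeff \<nu>))) ((x / 2)\<^sup>2)"
  define P where "P = x powr p"
  have summable: "summable (\<lambda>m. bessel_coeff \<nu> m * y ^ m)" "summable (\<lambda>m. diffs (bessel_coeff \<nu>) m * y ^ m)" for y
    using summable_bessel_coeff[OF assms(1)] by (auto intro: termdiff_converges_all)
  have "\<nu> - 1/2 = p - 1"
    by (simp add: p_def)
  let ?D = "p * ((p - 1) * x powr (p - 1 - 1) * S + x powr (p - 1) * (S1 * (x / 2)))
     + ((p * x powr (p - 1) * (x / 2) + x powr p * (1/2)) * S1 + x powr p * (x / 2) * (S2 * (x / 2)))"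
  have "(bessel_u' \<nu> has_real_derivative ?D) (at x)"
    unfolding bessel_u'_def \<open>\<nu> - 1/2 = p - 1\<close> p_def[symmetric] S_def S1_def S2_def using assms(2)
    by (auto intro!: derivative_eq_intros has_real_derivative_power_series_half_square summable
                     has_real_derivative_powr simp: algebra_simps) (simp add: field_simps)
  have powr1: "x powr (p - 1) = P / x" and powr2: "x powr (p - 1 - 1) = P / x\<^sup>2"
    unfolding P_def using assms(2) by (simp_all add: powr_diff power2_eq_square)
  have ode: "x\<^sup>2 * S2 = 4 * (- (\<nu> + 1) * S1 - S)"
    using bessel_series_ode[OF assms(1), of "(x / 2)\<^sup>2"] unfolding S_def S1_def S2_def
    by (simp add: power_divide field_simps)
  have "?D = p * (p - 1) * P * S / x\<^sup>2 + P * S1 * (p + 1/2) + P * (x\<^sup>2 * S2) / 4"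
    unfolding powr1 powr2 P_def[symmetric] using assms(2) by (simp add: field_simps power2_eq_square)
  also have "\<dots> = - (1 - (\<nu> + 1/2) * (\<nu> - 1/2) / x\<^sup>2) * (P * S)"
    unfolding ode p_def using assms(2) by (simp add: field_simps power2_eq_square)
  also have "P * S = bessel_u \<nu> x"
    by (simp add: bessel_u_def P_def p_def S_def)
  finally show ?thesis
    using \<open>(bessel_u' \<nu> has_real_derivative ?D) (at x)\<close> by simp
qed

lemma bessel_normal_form_bessel_u:
  assumes "-1 < \<nu>"
  shows "bessel_normal_form (bessel_u \<nu>) (bessel_u' \<nu>) ((\<nu> + 1/2) * (\<nu> - 1/2))"
proof
  fix x :: real assume "0 < x"
  show "(bessel_u \<nu> has_real_derivative bessel_u' \<nu> x) (at x)"
    by (rule has_real_derivative_bessel_u[OF assms \<open>0 < x\<close>])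
  show "(bessel_u' \<nu> has_real_derivative - (1 - (\<nu> + 1/2) * (\<nu> - 1/2) / x\<^sup>2) * bessel_u \<nu> x) (at x)"
    by (rule has_real_derivative_bessel_u'[OF assms \<open>0 < x\<close>])
qed

lemma negligible_bessel_J_tendsto_zero:
  fixes \<tau> :: "nat \<Rightarrow> real"
  assumes "-1 < \<nu>" and "\<And>n. 0 < \<tau> n" and "filterlim \<tau> at_top sequentially"
  shows "negligible {r. 0 < r \<and> (\<lambda>n. sqrt (\<tau> n) * \<bar>bessel_J \<nu> (r * \<tau> n)\<bar>) \<longlonglongrightarrow> 0}"
proof -
  obtain x0 where "0 < x0" and "bessel_u \<nu> x0 \<noteq> 0"
    using bessel_u_nonzero[OF assms(1)] by blast
  have "(\<lambda>n. sqrt (\<tau> n) * \<bar>bessel_J \<nu> (r * \<tau> n)\<bar>) \<longlonglongrightarrow> 0 \<longleftrightarrow> (\<lambda>n. bessel_u \<nu> (r * \<tau> n)) \<longlonglongrightarrow> 0"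
    if "0 < r" for r
  proof -
    let ?F = "\<lambda>n. sqrt (\<tau> n) * \<bar>bessel_J \<nu> (r * \<tau> n)\<bar>"
    have abs_eq: "\<bar>bessel_u \<nu> (r * \<tau> n)\<bar> = 2 powr \<nu> * sqrt r * ?F n" for n
      using abs_bessel_u[OF assms(1), of "r * \<tau> n"] \<open>0 < r\<close> assms(2)[of n] by (simp add: real_sqrt_mult)
    have "(\<lambda>n. bessel_u \<nu> (r * \<tau> n)) \<longlonglongrightarrow> 0 \<longleftrightarrow> (\<lambda>n. \<bar>bessel_u \<nu> (r * \<tau> n)\<bar>) \<longlonglongrightarrow> 0"
      by (rule tendsto_rabs_zero_iff[symmetric])
    also have "\<dots> \<longleftrightarrow> (\<lambda>n. 2 powr \<nu> * sqrt r * ?F n) \<longlonglongrightarrow> 2 powr \<nu> * sqrt r * 0"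
      by (simp only: abs_eq mult_zero_right)
    also have "\<dots> \<longleftrightarrow> ?F \<longlonglongrightarrow> 0"
      using \<open>0 < r\<close> by (intro tendsto_mult_left_iff) simp
    finally show ?thesis
      by (rule sym)
  qed
  then have "{r. 0 < r \<and> (\<lambda>n. sqrt (\<tau> n) * \<bar>bessel_J \<nu> (r * \<tau> n)\<bar>) \<longlonglongrightarrow> 0}
      = {r. 0 < r \<and> (\<lambda>n. bessel_u \<nu> (r * \<tau> n)) \<longlonglongrightarrow> 0}"
    by blast
  also have "negligible \<dots>"
    using bessel_normal_form.negligible_tendsto_zero[OF bessel_normal_form_bessel_u[OF assms(1)] assms(2,3) \<open>0 < x0\<close>]
      \<open>bessel_u \<nu> x0 \<noteq> 0\<close> by blast
  finally show ?thesis .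
qed

lemma limsup_mult_at_top:
  fixes f h :: "nat \<Rightarrow> real"
  assumes "\<And>n. 0 \<le> f n" and "\<not> f \<longlonglongrightarrow> 0" and "filterlim h at_top sequentially"
  shows "limsup (\<lambda>n. ereal (f n * h n)) = \<infinity>"
proof (rule ereal_top)
  fix B
  obtain \<epsilon> where "\<epsilon> > 0" and large: "\<exists>\<^sub>F n in sequentially. \<epsilon> \<le> f n"
    using assms(1,2) by (auto simp: tendsto_iff not_eventually not_less)
  have "\<forall>\<^sub>F n in sequentially. (\<bar>B\<bar> + 1) / \<epsilon> \<le> h n"
    using assms(3) by (simp add: filterlim_at_top)
  with large have "\<exists>\<^sub>F n in sequentially. \<epsilon> \<le> f n \<and> (\<bar>B\<bar> + 1) / \<epsilon> \<le> h n"
    by (rule frequently_eventually_frequently)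
  then have "\<exists>\<^sub>F n in sequentially. ereal B < ereal (f n * h n)"
  proof (rule frequently_elim1)
    fix n assume n: "\<epsilon> \<le> f n \<and> (\<bar>B\<bar> + 1) / \<epsilon> \<le> h n"
    have "B < \<epsilon> * ((\<bar>B\<bar> + 1) / \<epsilon>)"
      using \<open>\<epsilon> > 0\<close> by simp
    also have "\<dots> \<le> f n * h n"
      using n \<open>\<epsilon> > 0\<close> by (intro mult_mono) (auto intro: order_trans[rotated])
    finally show "ereal B < ereal (f n * h n)"
      by simp
  qed
  show "ereal B \<le> limsup (\<lambda>n. ereal (f n * h n))"
  proof (rule ccontr)
    assume "\<not> ereal B \<le> limsup (\<lambda>n. ereal (f n * h n))"
    moreover have "\<forall>y > limsup (\<lambda>n. ereal (f n * h n)). \<forall>\<^sub>F n in sequentially. ereal (f n * h n) < y"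
      by (rule Limsup_le_iff[THEN iffD1, OF order_refl])
    ultimately have "\<forall>\<^sub>F n in sequentially. ereal (f n * h n) < ereal B"
      by (simp only: not_le)
    then have "\<forall>\<^sub>F n in sequentially. \<not> ereal B < ereal (f n * h n)"
      by (rule eventually_mono) simp
    with \<open>\<exists>\<^sub>F n in sequentially. ereal B < ereal (f n * h n)\<close> show False
      by (simp add: frequently_def)
  qed
qed

theorem lemmaA8:
  fixes \<tau> :: "nat \<Rightarrow> real" and g :: "real \<Rightarrow> real"
  assumes "\<And>n. \<tau> n > 0"
    and "filterlim \<tau> at_top sequentially"
    and "\<And>t. t > 0 \<Longrightarrow> g t > 0"
    and "filterlim g at_top at_top"
  shows "\<exists>E. E \<subseteq> {0<..} \<and> E \<in> sets lebesgue \<and> {0<..} - E \<in> null_sets lebesgue \<and>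
           (\<forall>r\<in>E. \<forall>k::nat.
              limsup (\<lambda>n. ereal (sqrt (\<tau> n) * \<bar>bessel_J (real k / 2) (r * \<tau> n)\<bar> * g (\<tau> n))) = \<infinity>)"
proof -
  define N where "N k = {r. 0 < r \<and> (\<lambda>n. sqrt (\<tau> n) * \<bar>bessel_J (real k / 2) (r * \<tau> n)\<bar>) \<longlonglongrightarrow> 0}" for k :: nat
  have "negligible (\<Union>k. N k)"
    unfolding N_def by (intro negligible_Union_nat negligible_bessel_J_tendsto_zero assms(1,2)) simp
  show ?thesis
  proof (intro exI[of _ "{0<..} - (\<Union>k. N k)"] conjI ballI allI)
    show "{0<..} - (\<Union>k. N k) \<subseteq> {0<..}"
      by blast
    show "{0<..} - (\<Union>k. N k) \<in> sets lebesgue"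
      using \<open>negligible (\<Union>k. N k)\<close> by (intro sets.Diff) (auto simp: negligible_iff_null_sets dest: null_setsD2)
    have "negligible ({0<..} - ({0<..} - (\<Union>k. N k)))"
      using \<open>negligible (\<Union>k. N k)\<close> by (rule negligible_subset) blast
    then show "{0<..} - ({0<..} - (\<Union>k. N k)) \<in> null_sets lebesgue"
      by (simp add: negligible_iff_null_sets)
    fix r k assume "r \<in> {0<..} - (\<Union>k. N k)"
    then have "\<not> (\<lambda>n. sqrt (\<tau> n) * \<bar>bessel_J (real k / 2) (r * \<tau> n)\<bar>) \<longlonglongrightarrow> 0"
      by (auto simp: N_def)
    then show "limsup (\<lambda>n. ereal (sqrt (\<tau> n) * \<bar>bessel_J (real k / 2) (r * \<tau> n)\<bar> * g (\<tau> n))) = \<infinity>"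
      using assms(1) by (intro limsup_mult_at_top filterlim_compose[OF assms(4,2)]) (auto simp: less_imp_le)
  qed
qed

end
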